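(* Let $\beta_1,\dots,\beta_d$, $\bar{\mu}$, $\lambda$ and $R_n$ be as in the context, and assume $\lambda<\frac{4}{|\beta_1\cdots\beta_d|}$. Then $\bar{\mu}(R_n)$ grows exponentially in $n$, i.e. there exist $c>0$ and $\rho>1$ such that $\bar{\mu}(R_n)\ge c\rho^n$ for all $n\in\mathbb{N}$.
   Context: Let $\beta\in(1,2)$ be an algebraic integer none of whose Galois conjugates has modulus $1$. List all its Galois conjugates (both members of each complex-conjugate pair) as $\beta=\beta_1,\dots,\beta_d,\beta_{d+1},\dots,\beta_{d+s},\beta_{d+s+1}$, where $|\beta_1|,\dots,|\beta_d|>1$, $|\beta_{d+1}|,\dots,|\beta_{d+s}|<1$, and $\beta_{d+s+1}$ is real with $|\beta_{d+s+1}|>1$. For $z\in\mathbb{C}$ let $\mathbb{F}_z=\mathbb{R}$ if $z\in\mathbb{R}$ and $\mathbb{C}$ otherwise; let $\bar{\mathbb{K}}=\prod_{j=1}^{d+s+1}\mathbb{F}_{\beta_j}$ and $\bar{\beta}^n=(\beta_1^n,\dots,\beta_{d+s+1}^n)$. Let $\pi_e(x)=(x_1,\dots,x_d)$ and $\pi_{free}(x)=x_{d+s+1}$. For $j\le d$ let $I_{\beta_j}=[-\frac{1}{\beta_j-1},\frac{1}{\beta_j-1}]$ if $\beta_j>1$, $I_{\beta_j}=\{x\in\mathbb{R}:|x|\le\frac{2}{|\beta_j|-1}\}$ if $\beta_j<-1$, $I_{\beta_j}=\{z\in\mathbb{C}:|z|\le\frac{2}{|\beta_j|-1}\}$ if $\beta_j\notin\mathbb{R}$;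 $I=\prod_{j\le d}I_{\beta_j}$ and $S=\{x\in\bar{\mathbb{K}}:\pi_e(x)\in I\}$. Let $\bar{X}=\{\sum_{i=1}^n a_i\bar{\beta}^{n-i}:n\in\mathbb{N},a_i\in\{-1,0,1\}\}\cap S$. For $n\ge1$ and $x\in S$ let $\bar{\mu}_n(\{x\})=\#\{(a,b)\in\{0,1\}^n\times\{0,1\}^n:\sum_{i=1}^n(a_i-b_i)\bar{\beta}^{n-i}=x\}$. It is known (from earlier work of the authors) that there exist $\lambda>1$ and $f:\bar{X}\to(0,\infty)$ with $\lambda^{-n}\bar{\mu}_n(\{x\})\to f(x)$ for every $x\in\bar{X}$, and that $0<f(x)\le f(0)$; let $\bar{\mu}=\sum_{x\in\bar{X}}f(x)\delta_x$. For $n\ge0$ let $R_n=\{x\in\bar{X}:|\pi_{free}(x)|\le\sum_{i=0}^{n-1}|\beta_{d+s+1}|^i\}$. *)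

theory Defs
  imports "HOL-Analysis.Analysis" "HOL-Computational_Algebra.Computational_Algebra"
begin

text \<open>Conjugates of beta are given as a list bs of complex numbers,
  bs ! j corresponding to beta_(j+1). Points of the product space are
  represented as functions nat => complex (coordinate j for j < length bs).\<close>

definition conj_setup :: "real \<Rightarrow> complex list \<Rightarrow> nat \<Rightarrow> nat \<Rightarrow> bool" where
  "conj_setup \<beta> bs d s \<longleftrightarrow>
     (\<exists>p :: int poly. lead_coeff p = 1 \<and> irreducible p \<and>
        distinct bs \<and> set bs = {z. poly (map_poly of_int p) z = 0}) \<and>
     length bs = d + s + 1 \<and> bs ! 0 = complex_of_real \<beta> \<and>
     (\<forall>z\<in>set bs. norm z \<noteq> 1) \<and>
     (\<forall>j<d. norm (bs ! j) > 1) \<and>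
     (\<forall>j. d \<le> j \<and> j < d + s \<longrightarrow> norm (bs ! j) < 1) \<and>
     bs ! (d + s) \<in> \<real> \<and> norm (bs ! (d + s)) > 1"

definition conj_vec :: "complex list \<Rightarrow> int list \<Rightarrow> nat \<Rightarrow> complex" where
  "conj_vec bs a = (\<lambda>j. if j < length bs then
      (\<Sum>i<length a. of_int (a ! i) * (bs ! j) ^ (length a - 1 - i)) else 0)"

definition I_beta :: "complex \<Rightarrow> complex set" where
  "I_beta b = (if b \<in> \<real> then
      (if Re b > 1 then {x. x \<in> \<real> \<and> norm x \<le> 1 / (Re b - 1)}
       else {x. x \<in> \<real> \<and> norm x \<le> 2 / (norm b - 1)})
    else {z. norm z \<le> 2 / (norm b - 1)})"

definition S_set :: "complex list \<Rightarrow> nat \<Rightarrow> (nat \<Rightarrow> complex) set" where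
  "S_set bs d = {x. (\<forall>j<length bs. bs ! j \<in> \<real> \<longrightarrow> x j \<in> \<real>) \<and>
                    (\<forall>j\<ge>length bs. x j = 0) \<and>
                    (\<forall>j<d. x j \<in> I_beta (bs ! j))}"

definition Xbar :: "complex list \<Rightarrow> nat \<Rightarrow> (nat \<Rightarrow> complex) set" where
  "Xbar bs d = {conj_vec bs a | a. set a \<subseteq> {-1, 0, 1}} \<inter> S_set bs d"

definition mu_n :: "complex list \<Rightarrow> nat \<Rightarrow> (nat \<Rightarrow> complex) \<Rightarrow> nat" where
  "mu_n bs n x = card {(a, b). length a = n \<and> length b = n \<and>
       set a \<subseteq> {0, 1} \<and> set b \<subseteq> {0, 1} \<and>
       conj_vec bs (map2 (\<lambda>u v. u - v) a b) = x}"

definition R_set :: "complex list \<Rightarrow> nat \<Rightarrow> nat \<Rightarrow> nat \<Rightarrow> (nat \<Rightarrow> complex) set" where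
  "R_set bs d s n = {x \<in> Xbar bs d.
      norm (x (d + s)) \<le> (\<Sum>i<n. norm (bs ! (d + s)) ^ i)}"

end

theory Submission
  imports Defs
begin

text \<open>Sort the \<open>4^n\<close> pairs \<open>(a, b)\<close> of binary words of length \<open>n\<close> by the grid cell, of
  mesh \<open>1 / (|\<beta>_j| - 1)\<close>, containing \<open>\<Sum> a_i \<beta>_j^(n-i)\<close> in each expanding coordinate \<open>j\<close>
  (of a complex-conjugate pair only the member in the upper half-plane matters). There are
  \<open>O(|\<beta>_1 \<cdots> \<beta>_d|^n)\<close> cells, and two words in the same cell differ by a point of \<open>S\<close>, so by
  Cauchy-Schwarz at least \<open>4^n / O(|\<beta>_1 \<cdots> \<beta>_d|^n)\<close> pairs give points of \<open>R_n\<close>. Each such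
  point \<open>x\<close> arises \<open>\<mu>_n{x}\<close> times, and supermultiplicativity \<open>\<mu>_k{0} \<mu>_n{x} \<le> \<mu>_(k+n){x}\<close>
  yields \<open>f(x) \<ge> f(0) \<lambda>^(-n) \<mu>_n{x}\<close>; summing gives
  \<open>\<mu>(R_n) \<ge> f(0) 25^(-d) (4 / (\<lambda> |\<beta>_1 \<cdots> \<beta>_d|))^n\<close>.\<close>

fun radix_val :: "'a :: comm_ring_1 \<Rightarrow> int list \<Rightarrow> 'a" where
  "radix_val b [] = 0"
| "radix_val b (x # xs) = of_int x * b ^ length xs + radix_val b xs"

lemma radix_val_eq_sum:
  "radix_val b a = (\<Sum>i<length a. of_int (a ! i) * b ^ (length a - 1 - i))"
proof (induction a)
  case (Cons x xs)
  then show ?case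
    unfolding length_Cons sum.lessThan_Suc_shift by simp
qed simp

lemma conj_vec_apply:
  "conj_vec bs a j = (if j < length bs then radix_val (bs ! j) a else 0)"
  by (simp add: conj_vec_def radix_val_eq_sum)

lemma radix_val_append: "radix_val b (xs @ ys) = b ^ length ys * radix_val b xs + radix_val b ys"
  by (induction xs) (auto simp: algebra_simps power_add)

lemma radix_val_map2_diff:
  "length xs = length ys \<Longrightarrow>
    radix_val b (map2 (\<lambda>u v. u - v) xs ys) = radix_val b xs - radix_val b ys"
proof (induction xs arbitrary: ys)
  case (Cons x xs)
  then show ?case by (cases ys) (auto simp: algebra_simps)
qed simp

lemma radix_val_Reals: "(b :: 'a :: {real_algebra_1, comm_ring_1}) \<in> \<real> \<Longrightarrow> radix_val b xs \<in> \<real>"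
  by (induction xs) auto

lemma radix_val_cnj: "radix_val (cnj b) xs = cnj (radix_val b xs)"
  by (induction xs) auto

lemma norm_radix_val_le:
  fixes b :: "'a :: {real_normed_div_algebra, comm_ring_1}"
  shows "set xs \<subseteq> {-1, 0, 1} \<Longrightarrow> norm (radix_val b xs) \<le> (\<Sum>i<length xs. norm b ^ i)"
proof (induction xs)
  case (Cons x xs)
  have "norm (of_int x * b ^ length xs) \<le> norm b ^ length xs"
    using Cons.prems by (auto simp: norm_mult norm_power)
  then have "norm (radix_val b (x # xs)) \<le> norm b ^ length xs + (\<Sum>i<length xs. norm b ^ i)"
    using Cons by (simp add: norm_triangle_le)
  then show ?case
    by simp
qed simp

definition bin_words :: "nat \<Rightarrow> int list set" where
  "bin_words n = {a. set a \<subseteq> {0, 1} \<and> length a = n}"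

lemma finite_bin_words [simp]: "finite (bin_words n)"
  unfolding bin_words_def by (rule finite_lists_length_eq) simp

lemma card_bin_words: "card (bin_words n) = 2 ^ n"
  unfolding bin_words_def by (subst card_lists_length_eq) (simp_all add: numeral_2_eq_2)

definition diff_vec :: "complex list \<Rightarrow> int list \<times> int list \<Rightarrow> nat \<Rightarrow> complex" where
  "diff_vec bs p = conj_vec bs (map2 (\<lambda>u v. u - v) (fst p) (snd p))"

lemma diff_vec_apply:
  "length a = length b \<Longrightarrow> j < length bs \<Longrightarrow>
    diff_vec bs (a, b) j = radix_val (bs ! j) a - radix_val (bs ! j) b"
  by (simp add: diff_vec_def conj_vec_apply radix_val_map2_diff)

lemma mu_n_eq_card: "mu_n bs n x = card {p \<in> bin_words n \<times> bin_words n. diff_vec bs p = x}"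
  unfolding mu_n_def bin_words_def diff_vec_def by (rule arg_cong[where f = card]) auto

lemma diff_vec_append_zero:
  assumes "length a = length b" and "diff_vec bs (a, b) = (\<lambda>_. 0)"
  shows "diff_vec bs (a @ a', b @ b') = diff_vec bs (a', b')"
proof
  fix j
  have "radix_val (bs ! j) (map2 (\<lambda>u v. u - v) a b) = 0" if "j < length bs"
    using fun_cong[OF assms(2), of j] that by (simp add: diff_vec_def conj_vec_apply)
  then show "diff_vec bs (a @ a', b @ b') j = diff_vec bs (a', b') j"
    using assms(1) by (simp add: diff_vec_def conj_vec_apply radix_val_append)
qed

lemma mu_n_zero_mult_le: "mu_n bs k (\<lambda>_. 0) * mu_n bs n x \<le> mu_n bs (k + n) x"
proof -
  define A where "A = {p \<in> bin_words k \<times> bin_words k. diff_vec bs p = (\<lambda>_. 0)}"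
  define B where "B = {p \<in> bin_words n \<times> bin_words n. diff_vec bs p = x}"
  define C where "C = {p \<in> bin_words (k + n) \<times> bin_words (k + n). diff_vec bs p = x}"
  define concat :: "(int list \<times> int list) \<times> (int list \<times> int list) \<Rightarrow> int list \<times> int list"
    where "concat = (\<lambda>((a, b), (a', b')). (a @ a', b @ b'))"
  have "inj_on concat (A \<times> B)"
  proof (rule inj_onI)
    fix u v assume uv: "u \<in> A \<times> B" "v \<in> A \<times> B" "concat u = concat v"
    obtain a b a' b' c e c' e' where u: "u = ((a, b), (a', b'))" and v: "v = ((c, e), (c', e'))"
      by (metis prod.exhaust)
    have "length a = length c" "length b = length e" "a @ a' = c @ c'" "b @ b' = e @ e'"
      using uv by (auto simp: u v A_def bin_words_def concat_def)
    then show "u = v"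
      by (simp add: u v append_eq_append_conv)
  qed
  moreover have "concat ` (A \<times> B) \<subseteq> C"
  proof (rule image_subsetI)
    fix u assume "u \<in> A \<times> B"
    moreover obtain a b a' b' where u: "u = ((a, b), (a', b'))"
      by (metis prod.exhaust)
    ultimately show "concat u \<in> C"
      by (auto simp: u concat_def A_def B_def C_def bin_words_def diff_vec_append_zero)
  qed
  moreover have "finite C"
    by (simp add: C_def)
  ultimately have "card (A \<times> B) \<le> card C"
    by (metis card_image card_mono)
  then show ?thesis
    by (simp add: A_def B_def C_def mu_n_eq_card card_cartesian_product)
qed

lemma scaled_mu_n_le_limit:
  fixes lam :: real and f0 fx :: real
  assumes "lam > 0"
    and "(\<lambda>k. real (mu_n bs k (\<lambda>_. 0)) / lam ^ k) \<longlonglongrightarrow> f0"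
    and "(\<lambda>k. real (mu_n bs k x) / lam ^ k) \<longlonglongrightarrow> fx"
  shows "f0 * (real (mu_n bs n x) / lam ^ n) \<le> fx"
proof (rule LIMSEQ_le)
  show "(\<lambda>k. real (mu_n bs k (\<lambda>_. 0)) / lam ^ k * (real (mu_n bs n x) / lam ^ n))
      \<longlonglongrightarrow> f0 * (real (mu_n bs n x) / lam ^ n)"
    by (intro tendsto_mult assms(2) tendsto_const)
  show "(\<lambda>k. real (mu_n bs (k + n) x) / lam ^ (k + n)) \<longlonglongrightarrow> fx"
    using LIMSEQ_ignore_initial_segment[OF assms(3), of n] by simp
  show "\<exists>N. \<forall>k\<ge>N. real (mu_n bs k (\<lambda>_. 0)) / lam ^ k * (real (mu_n bs n x) / lam ^ n)
      \<le> real (mu_n bs (k + n) x) / lam ^ (k + n)"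
  proof (intro exI allI impI)
    fix k
    have "real (mu_n bs k (\<lambda>_. 0)) * real (mu_n bs n x) \<le> real (mu_n bs (k + n) x)"
      by (metis mu_n_zero_mult_le of_nat_le_iff of_nat_mult)
    then show "real (mu_n bs k (\<lambda>_. 0)) / lam ^ k * (real (mu_n bs n x) / lam ^ n)
      \<le> real (mu_n bs (k + n) x) / lam ^ (k + n)"
      using assms(1) by (simp add: power_add divide_right_mono)
  qed
qed

definition grid_cell :: "real \<Rightarrow> complex \<Rightarrow> int \<times> int" where
  "grid_cell t z = (\<lfloor>Re z * t\<rfloor>, \<lfloor>Im z * t\<rfloor>)"

lemma abs_diff_less_one_if_floor_eq: "\<lfloor>x :: real\<rfloor> = \<lfloor>y\<rfloor> \<Longrightarrow> \<bar>x - y\<bar> < 1"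
  using of_int_floor_le[of x] of_int_floor_le[of y] real_of_int_floor_add_one_gt[of x]
    real_of_int_floor_add_one_gt[of y]
  by linarith

lemma norm_diff_less_if_grid_cell_eq:
  assumes "t > 0" and "grid_cell t z = grid_cell t w"
  shows "norm (z - w) < 2 / t" and "z - w \<in> \<real> \<Longrightarrow> norm (z - w) < 1 / t"
proof -
  have "\<bar>Re z * t - Re w * t\<bar> < 1" "\<bar>Im z * t - Im w * t\<bar> < 1"
    using assms(2) abs_diff_less_one_if_floor_eq by (auto simp: grid_cell_def)
  then have "\<bar>Re (z - w)\<bar> * t < 1" "\<bar>Im (z - w)\<bar> * t < 1"
    using assms(1) by (simp_all add: left_diff_distrib[symmetric] abs_mult)
  then have re: "\<bar>Re (z - w)\<bar> < 1 / t" and im: "\<bar>Im (z - w)\<bar> < 1 / t"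
    using assms(1) by (simp_all add: field_simps)
  show "norm (z - w) < 2 / t"
    using cmod_le[of "z - w"] re im by simp
  show "norm (z - w) < 1 / t" if "z - w \<in> \<real>"
    using that re by (simp add: complex_is_Real_iff cmod_eq_Re)
qed

lemma grid_cell_mem_square:
  assumes "t \<ge> 0" and "norm z * t < of_int m"
  shows "grid_cell t z \<in> {-m..m} \<times> {-m..m}"
proof -
  have "\<bar>Re z * t\<bar> < m" "\<bar>Im z * t\<bar> < m"
    using assms(2) mult_right_mono[OF abs_Re_le_cmod assms(1), of z]
      mult_right_mono[OF abs_Im_le_cmod assms(1), of z] assms(1)
    by (simp_all add: abs_mult)
  then show ?thesis
    unfolding grid_cell_def by (auto simp: floor_less_iff le_floor_iff) linarith+
qed

lemma snd_grid_cell_Reals: "z \<in> \<real> \<Longrightarrow> snd (grid_cell t z) = 0"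
  by (simp add: grid_cell_def complex_is_Real_iff)

lemma card_symmetric_ceiling_interval_le:
  assumes "x \<ge> 1"
  shows "real (card {-\<lceil>x\<rceil>..\<lceil>x\<rceil>}) \<le> 5 * x"
  using assms by simp linarith

lemma card_sq_le_card_same_key_pairs:
  assumes "finite W"
  shows "real (card W) ^ 2 \<le> real (card {(a, b) \<in> W \<times> W. key a = key b}) * real (card (key ` W))"
proof -
  define fibre where "fibre k = {a \<in> W. key a = k}" for k
  have fin: "finite (key ` W)" "finite (fibre k)" for k
    using assms by (simp_all add: fibre_def)
  have "card (\<Union>k\<in>key ` W. fibre k) = (\<Sum>k\<in>key ` W. card (fibre k))"
    using fin by (intro card_UN_disjoint) (auto simp: fibre_def)
  moreover have "(\<Union>k\<in>key ` W. fibre k) = W"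
    by (auto simp: fibre_def)
  ultimately have card_W: "card W = (\<Sum>k\<in>key ` W. card (fibre k))"
    by simp
  have "{(a, b) \<in> W \<times> W. key a = key b} = (\<Union>k\<in>key ` W. fibre k \<times> fibre k)"
    by (auto simp: fibre_def)
  moreover have "card (\<Union>k\<in>key ` W. fibre k \<times> fibre k) = (\<Sum>k\<in>key ` W. card (fibre k \<times> fibre k))"
    using fin by (intro card_UN_disjoint) (auto simp: fibre_def)
  ultimately have card_pairs:
    "card {(a, b) \<in> W \<times> W. key a = key b} = (\<Sum>k\<in>key ` W. card (fibre k) ^ 2)"
    by (simp add: card_cartesian_product power2_eq_square)
  have "real (card W) ^ 2 \<le> (\<Sum>k\<in>key ` W. real (card (fibre k)) ^ 2) * card (key ` W)"
    unfolding card_W of_nat_sum by (rule sum_squared_le_sum_of_squares)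
  then show ?thesis
    unfolding card_pairs by simp
qed

lemma mem_I_beta_if_norm_less:
  assumes "norm b > 1" and "b \<in> \<real> \<Longrightarrow> z \<in> \<real>"
    and "b \<in> \<real> \<Longrightarrow> norm z < 1 / (norm b - 1)" and "norm z < 2 / (norm b - 1)"
  shows "z \<in> I_beta b"
proof (cases "b \<in> \<real> \<and> Re b > 1")
  case True
  then have "norm b = Re b"
    by (auto elim!: Reals_cases)
  then show ?thesis
    using True assms unfolding I_beta_def by auto
qed (use assms in \<open>auto simp: I_beta_def\<close>)

locale expanding_conjugates =
  fixes bs :: "complex list" and d :: nat
  assumes d_le_length: "d \<le> length bs"
    and expanding: "j < d \<Longrightarrow> 1 < norm (bs ! j)"
    and cnj_closed: "j < d \<Longrightarrow> bs ! j \<notin> \<real> \<Longrightarrow> \<exists>j'<d. bs ! j' = cnj (bs ! j)"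
    and distinct_bs: "distinct bs"
begin

definition upper_indices :: "nat set" where
  "upper_indices = {j. j < d \<and> 0 \<le> Im (bs ! j)}"

definition cell_weight :: "nat \<Rightarrow> real" where
  "cell_weight j = (if bs ! j \<in> \<real> then norm (bs ! j) else norm (bs ! j) ^ 2)"

lemma cell_weight_nonneg: "0 \<le> cell_weight j"
  by (simp add: cell_weight_def)

lemma upper_representative:
  assumes "j < d"
  obtains j' where "j' \<in> upper_indices" and "bs ! j' = bs ! j \<or> bs ! j' = cnj (bs ! j)"
proof (cases "0 \<le> Im (bs ! j)")
  case True
  then show ?thesis
    using that assms by (auto simp: upper_indices_def)
next
  case False
  then have "bs ! j \<notin> \<real>"
    by (auto simp: complex_is_Real_iff)
  then obtain j' where "j' < d" "bs ! j' = cnj (bs ! j)"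
    using cnj_closed assms by blast
  with False show ?thesis
    using that[of j'] by (simp add: upper_indices_def)
qed

text \<open>Conjugation maps the non-real indices in \<open>upper_indices\<close> injectively to the indices
  below \<open>d\<close> in the lower half-plane, whose moduli all exceed 1.\<close>

lemma prod_cell_weight_le: "(\<Prod>j\<in>upper_indices. cell_weight j) \<le> norm (\<Prod>j<d. bs ! j)"
proof -
  define r where "r j = norm (bs ! j)" for j
  define Jp where "Jp = {j. j < d \<and> 0 < Im (bs ! j)}"
  define Jn where "Jn = {j. j < d \<and> Im (bs ! j) < 0}"
  have "\<forall>j\<in>Jp. \<exists>j'. j' < d \<and> bs ! j' = cnj (bs ! j)"
    using cnj_closed by (auto simp: Jp_def complex_is_Real_iff)
  then obtain \<sigma> where \<sigma>: "\<And>j. j \<in> Jp \<Longrightarrow> \<sigma> j < d \<and> bs ! \<sigma> j = cnj (bs ! j)"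
    by metis
  have "inj_on \<sigma> Jp"
  proof (rule inj_onI)
    fix i j assume "i \<in> Jp" "j \<in> Jp" "\<sigma> i = \<sigma> j"
    then have "bs ! i = bs ! j" "i < length bs" "j < length bs"
      using \<sigma>[of i] \<sigma>[of j] d_le_length by (auto simp: Jp_def)
    then show "i = j"
      using distinct_bs nth_eq_iff_index_eq by blast
  qed
  then have "(\<Prod>j\<in>Jp. r j) = (\<Prod>j\<in>\<sigma> ` Jp. r j)"
    using \<sigma> by (simp add: prod.reindex r_def)
  also have "\<dots> \<le> (\<Prod>j\<in>Jn. r j)"
  proof (rule prod_mono2)
    show "\<sigma> ` Jp \<subseteq> Jn"
      using \<sigma> by (auto simp: Jp_def Jn_def)
  qed (use expanding in \<open>auto simp: Jn_def r_def less_imp_le\<close>)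
  finally have Jp_le_Jn: "(\<Prod>j\<in>Jp. r j) \<le> (\<Prod>j\<in>Jn. r j)" .
  have "cell_weight j = r j * (if j \<in> Jp then r j else 1)" if "j \<in> upper_indices" for j
    using that by (auto simp: cell_weight_def r_def Jp_def upper_indices_def complex_is_Real_iff power2_eq_square)
  then have "(\<Prod>j\<in>upper_indices. cell_weight j) = (\<Prod>j\<in>upper_indices. r j) * (\<Prod>j\<in>upper_indices \<inter> Jp. r j)"
    by (simp add: prod.distrib prod.inter_restrict upper_indices_def)
  also have "upper_indices \<inter> Jp = Jp"
    by (auto simp: upper_indices_def Jp_def)
  also have "(\<Prod>j\<in>upper_indices. r j) * (\<Prod>j\<in>Jp. r j) \<le> (\<Prod>j\<in>upper_indices. r j) * (\<Prod>j\<in>Jn. r j)"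
    using Jp_le_Jn by (intro mult_left_mono) (auto simp: r_def prod_nonneg)
  also have "\<dots> = (\<Prod>j\<in>upper_indices \<union> Jn. r j)"
    by (rule prod.union_disjoint[symmetric]) (auto simp: upper_indices_def Jn_def)
  also have "upper_indices \<union> Jn = {..<d}"
    by (auto simp: upper_indices_def Jn_def)
  finally show ?thesis
    by (simp add: r_def prod_norm)
qed

definition cell_box :: "nat \<Rightarrow> nat \<Rightarrow> (int \<times> int) set" where
  "cell_box n j = (let m = \<lceil>norm (bs ! j) ^ n\<rceil> in
     {-m..m} \<times> (if bs ! j \<in> \<real> then {0} else {-m..m}))"

definition cell_key :: "int list \<Rightarrow> nat \<Rightarrow> int \<times> int" where
  "cell_key a = (\<lambda>j\<in>upper_indices. grid_cell (norm (bs ! j) - 1) (radix_val (bs ! j) a))"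

lemma grid_cell_radix_val_mem_cell_box:
  assumes "j < d" and "a \<in> bin_words n"
  shows "grid_cell (norm (bs ! j) - 1) (radix_val (bs ! j) a) \<in> cell_box n j"
proof -
  define r where "r = norm (bs ! j)"
  have r: "r > 1"
    using expanding assms(1) by (simp add: r_def)
  have "norm (radix_val (bs ! j) a) * (r - 1) \<le> (\<Sum>i<n. r ^ i) * (r - 1)"
    using norm_radix_val_le[of a "bs ! j"] assms(2) r
    by (intro mult_right_mono) (auto simp: bin_words_def r_def)
  also have "\<dots> < \<lceil>r ^ n\<rceil>"
    using power_diff_1_eq[of r n] by (simp add: mult.commute) linarith
  finally have "grid_cell (r - 1) (radix_val (bs ! j) a) \<in> {-\<lceil>r ^ n\<rceil>..\<lceil>r ^ n\<rceil>} \<times> {-\<lceil>r ^ n\<rceil>..\<lceil>r ^ n\<rceil>}"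
    using r by (intro grid_cell_mem_square) auto
  moreover have "snd (grid_cell (r - 1) (radix_val (bs ! j) a)) = 0" if "bs ! j \<in> \<real>"
    using that by (intro snd_grid_cell_Reals radix_val_Reals)
  ultimately show ?thesis
    by (auto simp: cell_box_def Let_def r_def mem_Times_iff)
qed

lemma card_cell_box_le:
  assumes "j < d"
  shows "real (card (cell_box n j)) \<le> 25 * cell_weight j ^ n"
proof -
  define x where "x = norm (bs ! j) ^ n"
  have "x \<ge> 1"
    using expanding assms by (simp add: x_def one_le_power less_imp_le)
  then have le: "real (card {-\<lceil>x\<rceil>..\<lceil>x\<rceil>}) \<le> 5 * x"
    by (rule card_symmetric_ceiling_interval_le)
  show ?thesis
  proof (cases "bs ! j \<in> \<real>")
    case True
    then show ?thesis
      using le \<open>x \<ge> 1\<close> by (simp add: cell_box_def Let_def cell_weight_def card_cartesian_product x_def)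
  next
    case False
    then have "real (card (cell_box n j)) = real (card {-\<lceil>x\<rceil>..\<lceil>x\<rceil>}) * real (card {-\<lceil>x\<rceil>..\<lceil>x\<rceil>})"
      by (simp add: cell_box_def Let_def card_cartesian_product x_def)
    also have "\<dots> \<le> (5 * x) * (5 * x)"
      using le by (intro mult_mono) auto
    also have "\<dots> = 25 * cell_weight j ^ n"
      using False by (simp add: cell_weight_def x_def power2_eq_square power_mult_distrib)
    finally show ?thesis .
  qed
qed

lemma card_cell_key_image_le:
  "real (card (cell_key ` bin_words n)) \<le> 25 ^ d * norm (\<Prod>j<d. bs ! j) ^ n"
proof -
  have fin: "finite upper_indices"
    by (simp add: upper_indices_def)
  have "cell_key ` bin_words n \<subseteq> Pi\<^sub>E upper_indices (cell_box n)"
    unfolding cell_key_def restrict_PiE_iff image_subset_iff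
    using grid_cell_radix_val_mem_cell_box by (auto simp: upper_indices_def)
  then have "real (card (cell_key ` bin_words n)) \<le> real (card (Pi\<^sub>E upper_indices (cell_box n)))"
    using fin by (intro of_nat_mono card_mono finite_PiE) (auto simp: cell_box_def Let_def)
  also have "\<dots> = (\<Prod>j\<in>upper_indices. real (card (cell_box n j)))"
    by (simp add: card_PiE[OF fin])
  also have "\<dots> \<le> (\<Prod>j\<in>upper_indices. 25 * cell_weight j ^ n)"
    by (rule prod_mono) (auto simp: card_cell_box_le upper_indices_def)
  also have "\<dots> = 25 ^ card upper_indices * (\<Prod>j\<in>upper_indices. cell_weight j) ^ n"
    by (simp add: prod.distrib prod_power_distrib)
  also have "\<dots> \<le> 25 ^ d * norm (\<Prod>j<d. bs ! j) ^ n"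
  proof (intro mult_mono power_mono power_increasing)
    show "card upper_indices \<le> d"
      using card_mono[of "{..<d}" upper_indices] by (auto simp: upper_indices_def)
  qed (auto simp: prod_cell_weight_le cell_weight_nonneg intro!: prod_nonneg zero_le_power)
  finally show ?thesis .
qed

lemma radix_val_diff_mem_I_beta:
  assumes "a \<in> bin_words n" "b \<in> bin_words n" "cell_key a = cell_key b" and "j < d"
  shows "radix_val (bs ! j) a - radix_val (bs ! j) b \<in> I_beta (bs ! j)"
proof -
  obtain j' where j': "j' \<in> upper_indices" "bs ! j' = bs ! j \<or> bs ! j' = cnj (bs ! j)"
    using upper_representative assms(4) by blast
  define z where "z = radix_val (bs ! j') a - radix_val (bs ! j') b"
  define t where "t = norm (bs ! j) - 1"
  have t: "t > 0" and norm_eq: "norm (bs ! j') = norm (bs ! j)"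
    using expanding assms(4) j'(2) by (auto simp: t_def)
  have diff: "radix_val (bs ! j) a - radix_val (bs ! j) b \<in> {z, cnj z}"
    using j'(2) by (auto simp: z_def radix_val_cnj)
  have "grid_cell t (radix_val (bs ! j') a) = grid_cell t (radix_val (bs ! j') b)"
    using fun_cong[OF assms(3), of j'] j'(1) by (simp add: cell_key_def t_def norm_eq)
  then have "norm z < 2 / t" "z \<in> \<real> \<Longrightarrow> norm z < 1 / t"
    using norm_diff_less_if_grid_cell_eq[OF t] by (simp_all add: z_def)
  moreover have "z \<in> \<real>" if "bs ! j \<in> \<real>"
    using that j'(2) Reals_cnj_iff[of "bs ! j"] by (auto simp: z_def intro!: Reals_diff radix_val_Reals)
  ultimately show ?thesis
    using diff expanding assms(4)
    by (intro mem_I_beta_if_norm_less) (auto simp: t_def Reals_cnj_iff)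
qed

lemma diff_vec_mem_S_set_if_same_cell_key:
  assumes "a \<in> bin_words n" "b \<in> bin_words n" "cell_key a = cell_key b"
  shows "diff_vec bs (a, b) \<in> S_set bs d"
proof -
  have len: "length a = length b"
    using assms by (simp add: bin_words_def)
  show ?thesis
    unfolding S_set_def
  proof (intro CollectI conjI allI impI)
    fix j assume "j < length bs" "bs ! j \<in> \<real>"
    then show "diff_vec bs (a, b) j \<in> \<real>"
      using len by (simp add: diff_vec_apply Reals_diff radix_val_Reals)
  next
    fix j assume "length bs \<le> j"
    then show "diff_vec bs (a, b) j = 0"
      by (simp add: diff_vec_def conj_vec_apply)
  next
    fix j assume "j < d"
    then show "diff_vec bs (a, b) j \<in> I_beta (bs ! j)"
      using radix_val_diff_mem_I_beta[OF assms] len d_le_length by (simp add: diff_vec_apply)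
  qed
qed

lemma one_le_norm_prod: "1 \<le> norm (\<Prod>j<d. bs ! j)"
  unfolding prod_norm[symmetric] using expanding by (intro prod_ge_1) (simp add: less_imp_le)

lemma card_pairs_mem_S_set_ge:
  "4 ^ n / (25 ^ d * norm (\<Prod>j<d. bs ! j) ^ n)
    \<le> real (card {p \<in> bin_words n \<times> bin_words n. diff_vec bs p \<in> S_set bs d})"
proof -
  let ?W = "bin_words n"
  have "{(a, b) \<in> ?W \<times> ?W. cell_key a = cell_key b} \<subseteq> {p \<in> ?W \<times> ?W. diff_vec bs p \<in> S_set bs d}"
    using diff_vec_mem_S_set_if_same_cell_key by auto
  then have same_key_le: "card {(a, b) \<in> ?W \<times> ?W. cell_key a = cell_key b}
      \<le> card {p \<in> ?W \<times> ?W. diff_vec bs p \<in> S_set bs d}"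
    by (intro card_mono) auto
  have "(4 :: real) ^ n = real (card ?W) ^ 2"
    by (simp add: card_bin_words power_mult_distrib[symmetric] power2_eq_square)
  also have "\<dots> \<le> real (card {(a, b) \<in> ?W \<times> ?W. cell_key a = cell_key b}) * real (card (cell_key ` ?W))"
    by (rule card_sq_le_card_same_key_pairs) simp
  also have "\<dots> \<le> real (card {p \<in> ?W \<times> ?W. diff_vec bs p \<in> S_set bs d}) * (25 ^ d * norm (\<Prod>j<d. bs ! j) ^ n)"
    using same_key_le card_cell_key_image_le[of n] by (intro mult_mono) auto
  finally have "4 ^ n \<le> real (card {p \<in> ?W \<times> ?W. diff_vec bs p \<in> S_set bs d})
      * (25 ^ d * norm (\<Prod>j<d. bs ! j) ^ n)" .
  moreover have "0 < 25 ^ d * norm (\<Prod>j<d. bs ! j) ^ n"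
    using one_le_norm_prod by (intro mult_pos_pos zero_less_power) (simp, linarith)
  ultimately show ?thesis
    by (simp add: pos_divide_le_eq)
qed

lemma zero_mem_Xbar: "(\<lambda>_. 0) \<in> Xbar bs d"
proof -
  have "conj_vec bs [] = (\<lambda>_. 0)"
    by (rule ext) (simp add: conj_vec_apply)
  then have "(\<lambda>_. 0) \<in> {conj_vec bs a |a. set a \<subseteq> {-1, 0, 1}}"
    by (intro CollectI exI[of _ "[]"]) simp
  moreover have "(\<lambda>_. 0) \<in> S_set bs d"
    using expanding by (auto simp: S_set_def intro!: mem_I_beta_if_norm_less)
  ultimately show ?thesis
    by (simp add: Xbar_def)
qed

end

lemma conj_setup_expanding_conjugates:
  assumes "conj_setup \<beta> bs d s"
  shows "expanding_conjugates bs d"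
proof
  obtain p :: "int poly" where distinct: "distinct bs"
    and roots: "set bs = {z. poly (map_poly of_int p) z = 0}"
    using assms unfolding conj_setup_def by blast
  have len: "length bs = d + s + 1" and expanding: "\<And>j. j < d \<Longrightarrow> 1 < norm (bs ! j)"
    and contracting: "\<And>j. d \<le> j \<Longrightarrow> j < d + s \<Longrightarrow> norm (bs ! j) < 1"
    and free_real: "bs ! (d + s) \<in> \<real>"
    using assms unfolding conj_setup_def by auto
  show "d \<le> length bs" "distinct bs" "\<And>j. j < d \<Longrightarrow> 1 < norm (bs ! j)"
    using len distinct expanding by auto
  show "\<exists>j'<d. bs ! j' = cnj (bs ! j)" if j: "j < d" "bs ! j \<notin> \<real>" for j
  proof -
    have "bs ! j \<in> set bs"
      using j(1) len by simp
    then have "poly (map_poly of_int p) (cnj (bs ! j)) = 0"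
      using roots real_poly_cnj_root_iff[of "map_poly of_int p"] by (simp add: coeff_map_poly)
    then have "cnj (bs ! j) \<in> set bs"
      using roots by simp
    then obtain j' where j': "j' < length bs" "bs ! j' = cnj (bs ! j)"
      by (metis in_set_conv_nth)
    have "j' < d"
    proof (rule ccontr)
      assume "\<not> j' < d"
      then consider "j' < d + s" | "j' = d + s"
        using j'(1) len by linarith
      then show False
      proof cases
        case 1
        then show False
          using contracting[of j'] expanding[of j] j j' \<open>\<not> j' < d\<close> by simp
      next
        case 2
        then show False
          using free_real j' j(2) by (simp add: complex_is_Real_iff)
      qed
    qed
    with j' show ?thesis
      by blast
  qed
qed

lemma diff_vec_mem_R_set:
  assumes "d + s < length bs" and "p \<in> bin_words n \<times> bin_words n" and "diff_vec bs p \<in> S_set bs d"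
  shows "diff_vec bs p \<in> R_set bs d s n"
proof -
  obtain a b where p: "p = (a, b)" and ab: "a \<in> bin_words n" "b \<in> bin_words n"
    using assms(2) by auto
  define digits where "digits = map2 (\<lambda>u v. u - v) a b"
  have "set digits \<subseteq> {-1, 0, 1}"
  proof
    fix y assume "y \<in> set digits"
    then obtain u v where uv: "(u, v) \<in> set (zip a b)" and y: "y = u - v"
      by (auto simp: digits_def)
    have "u \<in> {0, 1}" "v \<in> {0, 1}"
      using ab set_zip_leftD[OF uv] set_zip_rightD[OF uv] by (auto simp: bin_words_def)
    then show "y \<in> {-1, 0, 1}"
      using y by auto
  qed
  moreover have "length digits = n"
    using ab by (simp add: digits_def bin_words_def)
  moreover have "diff_vec bs p = conj_vec bs digits"
    by (simp add: p digits_def diff_vec_def)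
  ultimately show ?thesis
    using assms(1,3) norm_radix_val_le[of digits "bs ! (d + s)"]
    by (auto simp: R_set_def Xbar_def conj_vec_apply)
qed

lemma card_eq_sum_mu_n:
  "card {p \<in> bin_words n \<times> bin_words n. diff_vec bs p \<in> T}
    = (\<Sum>x\<in>diff_vec bs ` {p \<in> bin_words n \<times> bin_words n. diff_vec bs p \<in> T}. mu_n bs n x)"
    (is "card ?P = _")
proof -
  have "?P = (\<Union>x\<in>diff_vec bs ` ?P. {p \<in> bin_words n \<times> bin_words n. diff_vec bs p = x})"
    by auto
  also have "card \<dots> = (\<Sum>x\<in>diff_vec bs ` ?P. card {p \<in> bin_words n \<times> bin_words n. diff_vec bs p = x})"
    by (rule card_UN_disjoint) auto
  finally show ?thesis
    by (simp add: mu_n_eq_card)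
qed

lemma infsum_R_set_ge:
  fixes lam :: real and f :: "(nat \<Rightarrow> complex) \<Rightarrow> real"
  assumes "d + s < length bs" and "lam > 0"
    and lim: "\<forall>x\<in>Xbar bs d. (\<lambda>n. real (mu_n bs n x) / lam ^ n) \<longlonglongrightarrow> f x"
    and pos: "\<forall>x\<in>Xbar bs d. 0 < f x"
    and zero: "(\<lambda>_. 0) \<in> Xbar bs d"
  shows "ennreal (f (\<lambda>_. 0) / lam ^ n * card {p \<in> bin_words n \<times> bin_words n. diff_vec bs p \<in> S_set bs d})
    \<le> (\<Sum>\<^sub>\<infinity>x\<in>R_set bs d s n. ennreal (f x))"
proof -
  define P where "P = {p \<in> bin_words n \<times> bin_words n. diff_vec bs p \<in> S_set bs d}"
  define V where "V = diff_vec bs ` P"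
  have V_R: "V \<subseteq> R_set bs d s n"
    using diff_vec_mem_R_set[OF assms(1)] by (auto simp: V_def P_def)
  then have V_X: "V \<subseteq> Xbar bs d"
    by (auto simp: R_set_def)
  have fin: "finite V"
    by (simp add: V_def P_def)
  have "f (\<lambda>_. 0) / lam ^ n * card P = (\<Sum>x\<in>V. f (\<lambda>_. 0) * (real (mu_n bs n x) / lam ^ n))"
    by (simp add: P_def V_def card_eq_sum_mu_n sum_distrib_left)
  also have "\<dots> \<le> (\<Sum>x\<in>V. f x)"
    using V_X lim zero assms(2) by (intro sum_mono scaled_mu_n_le_limit) auto
  finally have "ennreal (f (\<lambda>_. 0) / lam ^ n * card P) \<le> ennreal (\<Sum>x\<in>V. f x)"
    by (rule ennreal_leI)
  also have "\<dots> = (\<Sum>x\<in>V. ennreal (f x))"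
    using V_X pos by (intro sum_ennreal[symmetric]) (auto simp: less_imp_le)
  also have "\<dots> = (\<Sum>\<^sub>\<infinity>x\<in>V. ennreal (f x))"
    using fin by simp
  also have "\<dots> \<le> (\<Sum>\<^sub>\<infinity>x\<in>R_set bs d s n. ennreal (f x))"
    using V_R by (intro infsum_mono_neutral) (auto intro: nonneg_summable_on_complete)
  finally show ?thesis
    by (simp add: P_def)
qed

theorem lemma4p2:
  fixes \<beta> :: real and bs :: "complex list" and d s :: nat
    and lam :: real and f :: "(nat \<Rightarrow> complex) \<Rightarrow> real"
  assumes beta_range: "1 < \<beta>" "\<beta> < 2"
    and conj: "conj_setup \<beta> bs d s"
    and lam_gt1: "lam > 1"
    and lim: "\<forall>x\<in>Xbar bs d. (\<lambda>n. real (mu_n bs n x) / lam ^ n) \<longlonglongrightarrow> f x"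
    and f_bounds: "\<forall>x\<in>Xbar bs d. 0 < f x \<and> f x \<le> f (\<lambda>_. 0)"
    and lam_small: "lam < 4 / norm (\<Prod>j<d. bs ! j)"
  shows "\<exists>c>0. \<exists>\<rho>>1. \<forall>n. (\<Sum>\<^sub>\<infinity>x\<in>R_set bs d s n. ennreal (f x)) \<ge> ennreal (c * \<rho> ^ n)"
proof -
  interpret expanding_conjugates bs d
    using conj by (rule conj_setup_expanding_conjugates)
  define P where "P = norm (\<Prod>j<d. bs ! j)"
  define c where "c = f (\<lambda>_. 0) / 25 ^ d"
  define \<rho> where "\<rho> = 4 / (lam * P)"
  have "f (\<lambda>_. 0) > 0"
    using f_bounds zero_mem_Xbar by simp
  then have "c > 0"
    by (simp add: c_def)
  have "P \<ge> 1" and "lam < 4 / P"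
    using one_le_norm_prod lam_small by (simp_all add: P_def)
  then have "\<rho> > 1"
    using lam_gt1 by (simp add: \<rho>_def pos_less_divide_eq)
  have "ennreal (c * \<rho> ^ n) \<le> (\<Sum>\<^sub>\<infinity>x\<in>R_set bs d s n. ennreal (f x))" for n
  proof -
    have "c * \<rho> ^ n = f (\<lambda>_. 0) / lam ^ n * (4 ^ n / (25 ^ d * P ^ n))"
      by (simp add: c_def \<rho>_def power_divide power_mult_distrib)
    also have "\<dots> \<le> f (\<lambda>_. 0) / lam ^ n * card {p \<in> bin_words n \<times> bin_words n. diff_vec bs p \<in> S_set bs d}"
      using card_pairs_mem_S_set_ge[of n] \<open>f (\<lambda>_. 0) > 0\<close> lam_gt1
      by (intro mult_left_mono) (simp_all add: P_def)
    finally show ?thesis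
      using infsum_R_set_ge[of d s bs lam f n] conj lam_gt1 lim f_bounds zero_mem_Xbar
      by (auto simp: conj_setup_def intro: order_trans[OF ennreal_leI])
  qed
  with \<open>c > 0\<close> \<open>\<rho> > 1\<close> show ?thesis
    by blast
qed

end
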